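(* Fix $\mathbf{x} \in \Omega$, $\alpha \in [0,1)$, and a total preorder $R$ on $\Omega$ with $\mathcal{F}(\Omega(\mathbf{x},R),\alpha)$ nonempty. Suppose there exists a set $C \subseteq S$ such that for any $G, H \in \mathcal{F}$ agreeing both cumulatively and pointwise on $C$, $P_G[\Omega(\mathbf{x},R)] = P_H[\Omega(\mathbf{x},R)]$. Then $$B_R^*(\mathbf{x}) = \min\{E[F] : F \in \mathcal{F}_{C^+}(\Omega(\mathbf{x},R),\alpha)\}.$$
   Context: Fix integers $m \ge 2$, $n \ge 1$ and reals $S_{\min} < S_{\max}$; $S = \{S_0,\dots,S_{m-1}\}$ with $S_k = S_{\min} + k\frac{S_{\max}-S_{\min}}{m-1}$. $\mathcal{F}$ is the set of probability distributions on $S$, identified with the probability simplex in $\mathbb{R}^m$ with the Euclidean topology; $E[F]$ is the mean. $\Omega$ is the set of samples of size $n$ from $S$, identified with their sorted versions. $P_F[\Omega']$ is the probability that the sorted sample of $n$ i.i.d. draws from $F$ lies in $\Omega' \subseteq \Omega$; $\mathcal{G}(\Omega',\alpha) = \{F : P_F[\Omega'] > \alpha\}$ and $\mathcal{F}(\Omega',\alpha)$ is its closure. A total preorder $R$ on $\Omega$ is a reflexive, transitive, total relation $\lesssim_R$; $\Omega(\mathbf{x},R) = \{\mathbf{y} : \mathbf{x} \lesssim_R \mathbf{y}\}$; $B_R^*(\mathbf{x}) = \min\{E[F] : F \in \mathcal{F}(\Omega(\mathbf{x},R),\alpha)\}$. For $C \subseteq S$: $G,H \in \mathcal{F}$ agree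 pointwise on $C$ if $P_G[X = s] = P_H[X = s]$ for all $s \in C$, and cumulatively on $C$ if $P_G[X \le s] = P_H[X \le s]$ for all $s \in C$ ($X$ a single draw). The refinement $\mathcal{F}_C = \{F \in \mathcal{F} : P_F[X = s] = 0 \ \forall s \in S\setminus C\}$, $\mathcal{G}_C(\Omega',\alpha) = \mathcal{F}_C \cap \mathcal{G}(\Omega',\alpha)$, and $\mathcal{F}_C(\Omega',\alpha)$ is the closure of $\mathcal{G}_C(\Omega',\alpha)$. The augmentation is $C^+ = C \cup \{S_{\min}\} \cup \{S_{j+1} : S_j \in C,\ j \le m-2\}$. *)

theory Defs
  imports "HOL-Analysis.Analysis" "HOL-Library.Multiset"
begin

text \<open>Support points are indexed by k < m; the actual value of index k is Sval.\<close>
definition Sval :: "real \<Rightarrow> real \<Rightarrow> nat \<Rightarrow> nat \<Rightarrow> real" where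
  "Sval Smin Smax m k = Smin + real k * (Smax - Smin) / (real m - 1)"

definition distrs :: "nat \<Rightarrow> (nat \<Rightarrow> real) set" where
  "distrs m = {F. (\<forall>k. k < m \<longrightarrow> 0 \<le> F k) \<and> (\<forall>k. m \<le> k \<longrightarrow> F k = 0)
                  \<and> (\<Sum>k<m. F k) = 1}"

definition mean :: "real \<Rightarrow> real \<Rightarrow> nat \<Rightarrow> (nat \<Rightarrow> real) \<Rightarrow> real" where
  "mean Smin Smax m F = (\<Sum>k<m. F k * Sval Smin Smax m k)"

text \<open>Sorted samples of size n, represented as multisets of indices.\<close>
definition samples :: "nat \<Rightarrow> nat \<Rightarrow> nat multiset set" where
  "samples m n = {M. size M = n \<and> set_mset M \<subseteq> {..<m}}"

text \<open>Probability that the sorted sample of n iid draws from F lies in Om'.\<close>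
definition prob_samp :: "nat \<Rightarrow> nat \<Rightarrow> (nat \<Rightarrow> real) \<Rightarrow> nat multiset set \<Rightarrow> real" where
  "prob_samp m n F Om' = (\<Sum>f \<in> {..<n} \<rightarrow>\<^sub>E {..<m}.
      if image_mset f (mset_set {..<n}) \<in> Om' then (\<Prod>i<n. F (f i)) else 0)"

definition Gset :: "nat \<Rightarrow> nat \<Rightarrow> nat multiset set \<Rightarrow> real \<Rightarrow> (nat \<Rightarrow> real) set" where
  "Gset m n Om' \<alpha> = {F \<in> distrs m. prob_samp m n F Om' > \<alpha>}"

definition Fset :: "nat \<Rightarrow> nat \<Rightarrow> nat multiset set \<Rightarrow> real \<Rightarrow> (nat \<Rightarrow> real) set" where
  "Fset m n Om' \<alpha> = closure (Gset m n Om' \<alpha>)"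

definition total_preorder_on_samples ::
  "nat multiset set \<Rightarrow> (nat multiset \<times> nat multiset) set \<Rightarrow> bool" where
  "total_preorder_on_samples Om R \<longleftrightarrow> R \<subseteq> Om \<times> Om \<and> refl_on Om R \<and> trans R \<and> total_on Om R"

definition upset :: "nat multiset set \<Rightarrow> (nat multiset \<times> nat multiset) set \<Rightarrow> nat multiset \<Rightarrow> nat multiset set" where
  "upset Om R x = {y \<in> Om. (x, y) \<in> R}"

definition is_min :: "real set \<Rightarrow> real \<Rightarrow> bool" where
  "is_min A v \<longleftrightarrow> v \<in> A \<and> (\<forall>a\<in>A. v \<le> a)"

definition Bstar :: "real \<Rightarrow> real \<Rightarrow> nat \<Rightarrow> nat \<Rightarrow> real \<Rightarrow> (nat multiset \<times> nat multiset) set \<Rightarrow> nat multiset \<Rightarrow> real" where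
  "Bstar Smin Smax m n \<alpha> R x = Inf (mean Smin Smax m ` Fset m n (upset (samples m n) R x) \<alpha>)"

definition agree_pointwise :: "nat set \<Rightarrow> (nat \<Rightarrow> real) \<Rightarrow> (nat \<Rightarrow> real) \<Rightarrow> bool" where
  "agree_pointwise C G H \<longleftrightarrow> (\<forall>k\<in>C. G k = H k)"

definition agree_cumulative :: "nat set \<Rightarrow> (nat \<Rightarrow> real) \<Rightarrow> (nat \<Rightarrow> real) \<Rightarrow> bool" where
  "agree_cumulative C G H \<longleftrightarrow> (\<forall>k\<in>C. (\<Sum>i\<le>k. G i) = (\<Sum>i\<le>k. H i))"

definition distrs_on :: "nat \<Rightarrow> nat set \<Rightarrow> (nat \<Rightarrow> real) set" where
  "distrs_on m C = {F \<in> distrs m. \<forall>k<m. k \<notin> C \<longrightarrow> F k = 0}"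

definition Gset_on :: "nat \<Rightarrow> nat \<Rightarrow> nat set \<Rightarrow> nat multiset set \<Rightarrow> real \<Rightarrow> (nat \<Rightarrow> real) set" where
  "Gset_on m n C Om' \<alpha> = distrs_on m C \<inter> Gset m n Om' \<alpha>"

definition Fset_on :: "nat \<Rightarrow> nat \<Rightarrow> nat set \<Rightarrow> nat multiset set \<Rightarrow> real \<Rightarrow> (nat \<Rightarrow> real) set" where
  "Fset_on m n C Om' \<alpha> = closure (Gset_on m n C Om' \<alpha>)"

definition augment :: "nat \<Rightarrow> nat set \<Rightarrow> nat set" where
  "augment m C = C \<union> {0} \<union> {Suc j | j. j \<in> C \<and> j \<le> m - 2}"

end

theory Submission
  imports Defs
begin

text \<open>Push the mass of every point outside C down to the first point of its gap, i.e. to the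
  successor of the largest element of C below it (or to 0). The resulting distribution lives
  on the augmentation of C, has the same point masses and the same cumulative masses on C, and
  has a smaller mean. By hypothesis it has the same probability of the upset of x, so every
  admissible distribution is dominated by one supported on the augmentation. Since the mean is
  continuous and the distributions form a compact set, the minimum over the closure of the
  refined set is then also the minimum over the closure of the unrestricted one.\<close>

definition collapse :: "nat set \<Rightarrow> nat \<Rightarrow> nat" where
  "collapse C k =
     (if k \<in> C then k else if \<exists>c\<in>C. c < k then Suc (Max {c\<in>C. c < k}) else 0)"

lemma collapse_eq_self [simp]: "k \<in> C \<Longrightarrow> collapse C k = k"
  by (simp add: collapse_def)

lemma Max_below_in:
  assumes "finite C" "c \<in> C" "c < k"
  shows "Max {c\<in>C. c < k} \<in> C" "Max {c\<in>C. c < k} < k" "c \<le> Max {c\<in>C. c < k}"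
proof -
  have "Max {c\<in>C. c < k} \<in> {c\<in>C. c < k}" using assms by (intro Max_in) auto
  then show "Max {c\<in>C. c < k} \<in> C" "Max {c\<in>C. c < k} < k" by auto
  show "c \<le> Max {c\<in>C. c < k}" using assms by (intro Max_ge) auto
qed

lemma collapse_le: "finite C \<Longrightarrow> collapse C k \<le> k"
  using Max_below_in(2) by (auto simp: collapse_def Suc_le_eq)

lemma collapse_notin:
  assumes fin: "finite C" and k: "k \<notin> C"
  shows "collapse C k \<notin> C"
proof (cases "\<exists>c\<in>C. c < k")
  case True
  then obtain c where c: "c \<in> C" "c < k" by blast
  define M where "M = Max {c\<in>C. c < k}"
  have "Suc M \<notin> C"
  proof
    assume "Suc M \<in> C"
    moreover have "Suc M < k"
      using calculation k Max_below_in(2)[OF fin c] unfolding M_def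
      by (metis Suc_leI le_neq_implies_less)
    ultimately show False using Max_below_in(3)[OF fin] unfolding M_def by fastforce
  qed
  then show ?thesis using True k by (simp add: collapse_def M_def)
next
  case False
  then have "0 \<notin> C" using k by (metis gr0I)
  then show ?thesis using False k by (simp add: collapse_def)
qed

lemma collapse_eq_iff:
  assumes "finite C" "c \<in> C"
  shows "collapse C k = c \<longleftrightarrow> k = c"
  using assms collapse_notin by (cases "k \<in> C") auto

lemma collapse_le_iff:
  assumes "finite C" "c \<in> C"
  shows "collapse C k \<le> c \<longleftrightarrow> k \<le> c"
proof
  assume le: "collapse C k \<le> c"
  show "k \<le> c"
  proof (rule ccontr)
    assume "\<not> k \<le> c"
    then have "c < k" "k \<notin> C" using le assms(2) by auto
    moreover have "\<exists>c\<in>C. c < k" using assms(2) calculation(1) by blast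
    ultimately have "Suc (Max {c\<in>C. c < k}) \<le> c" using le by (simp add: collapse_def)
    then show False using Max_below_in(3)[OF assms \<open>c < k\<close>] by simp
  qed
qed (use collapse_le[OF assms(1), of k] in simp)

lemma collapse_in_augment:
  assumes "C \<subseteq> {..<m}" "k < m"
  shows "collapse C k \<in> augment m C"
proof -
  have fin: "finite C" using assms(1) finite_subset by blast
  show ?thesis
  proof (cases "k \<notin> C \<and> (\<exists>c\<in>C. c < k)")
    case True
    then obtain c where "c \<in> C" "c < k" by blast
    then have "Max {c\<in>C. c < k} \<in> C" "Max {c\<in>C. c < k} \<le> m - 2"
      using Max_below_in[OF fin] assms(2) by fastforce+
    then show ?thesis using True unfolding collapse_def augment_def by auto
  qed (auto simp: collapse_def augment_def)
qed

definition pushforward :: "nat \<Rightarrow> (nat \<Rightarrow> nat) \<Rightarrow> (nat \<Rightarrow> real) \<Rightarrow> nat \<Rightarrow> real" where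
  "pushforward m g F i = sum F {k. k < m \<and> g k = i}"

lemma sum_pushforward:
  assumes "finite A"
  shows "sum (pushforward m g F) A = sum F {k. k < m \<and> g k \<in> A}"
proof -
  have "sum F {k. k < m \<and> g k \<in> A} =
        (\<Sum>i\<in>A. sum F {k \<in> {k. k < m \<and> g k \<in> A}. g k = i})"
    by (rule sum.group[symmetric]) (auto simp: assms)
  also have "\<dots> = sum (pushforward m g F) A"
    unfolding pushforward_def by (intro sum.cong refl arg_cong2[where f=sum]) auto
  finally show ?thesis by simp
qed

lemma pushforward_eq_0: "i \<notin> g ` {..<m} \<Longrightarrow> pushforward m g F i = 0"
  unfolding pushforward_def by (auto intro: sum.neutral)

lemma pushforward_in_distrs:
  assumes F: "F \<in> distrs m" and g: "\<And>k. k < m \<Longrightarrow> g k < m"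
  shows "pushforward m g F \<in> distrs m"
proof -
  have "0 \<le> pushforward m g F i" for i
    using F unfolding pushforward_def distrs_def by (auto intro: sum_nonneg)
  moreover have "pushforward m g F i = 0" if "m \<le> i" for i
    using that g by (intro pushforward_eq_0) fastforce
  moreover have "{k. k < m \<and> g k \<in> {..<m}} = {..<m}" using g by auto
  then have "(\<Sum>i<m. pushforward m g F i) = 1"
    using F by (simp add: sum_pushforward distrs_def)
  ultimately show ?thesis by (simp add: distrs_def)
qed

lemma mean_pushforward:
  assumes "\<And>k. k < m \<Longrightarrow> g k < m"
  shows "mean Smin Smax m (pushforward m g F) = (\<Sum>k<m. F k * Sval Smin Smax m (g k))"
proof -
  have "mean Smin Smax m (pushforward m g F)
        = (\<Sum>i<m. \<Sum>k\<in>{k \<in> {..<m}. g k = i}. F k * Sval Smin Smax m (g k))"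
    unfolding mean_def pushforward_def sum_distrib_right
    by (intro sum.cong refl) (auto intro: sum.cong)
  also have "\<dots> = (\<Sum>k<m. F k * Sval Smin Smax m (g k))"
    using assms by (intro sum.group) auto
  finally show ?thesis .
qed

lemma Sval_mono:
  assumes "m \<ge> 1" "Smin \<le> Smax" "j \<le> k"
  shows "Sval Smin Smax m j \<le> Sval Smin Smax m k"
  using assms unfolding Sval_def by (intro add_left_mono divide_right_mono mult_right_mono) auto

lemma mean_pushforward_le:
  assumes "m \<ge> 1" "Smin \<le> Smax" "F \<in> distrs m" "\<And>k. g k \<le> k"
  shows "mean Smin Smax m (pushforward m g F) \<le> mean Smin Smax m F"
proof -
  have "mean Smin Smax m (pushforward m g F) = (\<Sum>k<m. F k * Sval Smin Smax m (g k))"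
    using assms(4) by (intro mean_pushforward) (meson le_less_trans)
  also have "\<dots> \<le> mean Smin Smax m F"
    unfolding mean_def using assms
    by (intro sum_mono mult_left_mono Sval_mono) (auto simp: distrs_def)
  finally show ?thesis .
qed

lemma collapse_in_distrs_on:
  assumes "C \<subseteq> {..<m}" "F \<in> distrs m"
  shows "pushforward m (collapse C) F \<in> distrs_on m (augment m C)"
proof -
  have fin: "finite C" using assms(1) finite_subset by blast
  have "pushforward m (collapse C) F \<in> distrs m"
    using assms(2) collapse_le[OF fin] by (intro pushforward_in_distrs) (auto intro: le_less_trans)
  moreover have "pushforward m (collapse C) F k = 0" if "k \<notin> augment m C" for k
    using that collapse_in_augment[OF assms(1)] by (intro pushforward_eq_0) auto
  ultimately show ?thesis by (simp add: distrs_on_def)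
qed

lemma agree_pointwise_collapse:
  assumes "C \<subseteq> {..<m}"
  shows "agree_pointwise C F (pushforward m (collapse C) F)"
proof -
  have fin: "finite C" using assms finite_subset by blast
  have "{k. k < m \<and> collapse C k = c} = {c}" if "c \<in> C" for c
    using that assms collapse_eq_iff[OF fin that] by auto
  then show ?thesis by (simp add: agree_pointwise_def pushforward_def)
qed

lemma agree_cumulative_collapse:
  assumes "C \<subseteq> {..<m}"
  shows "agree_cumulative C F (pushforward m (collapse C) F)"
proof -
  have fin: "finite C" using assms finite_subset by blast
  have "{k. k < m \<and> collapse C k \<in> {..c}} = {..c}" if "c \<in> C" for c
    using that assms collapse_le_iff[OF fin that] by auto
  then show ?thesis by (simp add: agree_cumulative_def sum_pushforward)
qed

lemma closed_distrs: "closed (distrs m)"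
proof -
  have "closed {F :: nat \<Rightarrow> real. (\<Sum>k<m. F k) = 1}"
    by (intro closed_Collect_eq continuous_intros continuous_on_product_coordinates)
  moreover have "closed {F :: nat \<Rightarrow> real. k < m \<longrightarrow> 0 \<le> F k}" for k
    by (cases "k < m") (auto intro: closed_Collect_le continuous_on_product_coordinates)
  moreover have "closed {F :: nat \<Rightarrow> real. m \<le> k \<longrightarrow> F k = 0}" for k
    by (cases "m \<le> k") (auto intro: closed_Collect_eq continuous_on_product_coordinates)
  ultimately show ?thesis
    unfolding distrs_def by (intro closed_Collect_conj closed_Collect_all) auto
qed

lemma compact_distrs: "compact (distrs m)"
proof -
  define K where "K = (PiE UNIV (\<lambda>k. if k < m then {0..1} else {0}) :: (nat \<Rightarrow> real) set)"
  have "compactin (product_topology (\<lambda>_. euclidean) UNIV) K"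
    unfolding K_def by (subst compactin_PiE) auto
  then have "compact K" by (simp add: euclidean_product_topology)
  moreover have "distrs m \<subseteq> K"
  proof
    fix F assume F: "F \<in> distrs m"
    have "F k \<le> 1" if "k < m" for k
    proof -
      have "F k \<le> (\<Sum>k<m. F k)" using F that by (intro member_le_sum) (auto simp: distrs_def)
      then show ?thesis using F by (simp add: distrs_def)
    qed
    then show "F \<in> K" using F unfolding K_def distrs_def by auto
  qed
  ultimately show ?thesis using closed_distrs compact_Int_closed by (metis inf.absorb2)
qed

lemma continuous_mean: "continuous_on UNIV (mean Smin Smax m)"
  unfolding mean_def by (intro continuous_intros continuous_on_product_coordinates)

lemma is_min_closure_of_dominating_subset:
  fixes f :: "'a::t2_space \<Rightarrow> real"
  assumes "compact K" "G \<subseteq> K" "G' \<subseteq> G" "G \<noteq> {}" "continuous_on UNIV f"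
    and dominated: "\<And>x. x \<in> G \<Longrightarrow> \<exists>y\<in>G'. f y \<le> f x"
  shows "is_min (f ` closure G') (Inf (f ` closure G))"
proof -
  have "closure G \<subseteq> K" using assms(1,2) by (simp add: closure_minimal compact_imp_closed)
  then have "compact (closure G')"
    using assms(1,3) closure_mono by (metis closed_closure compact_Int_closed inf.absorb2 order_trans)
  moreover have "closure G' \<noteq> {}" using assms(4) dominated by auto
  ultimately obtain z where z: "z \<in> closure G'" "\<And>y. y \<in> closure G' \<Longrightarrow> f z \<le> f y"
    using continuous_attains_inf assms(5) continuous_on_subset by (metis subset_UNIV)
  have "G \<subseteq> {x. f z \<le> f x}" using dominated z(2) closure_subset by fastforce
  then have "closure G \<subseteq> {x. f z \<le> f x}"
    using assms(5) by (intro closure_minimal closed_Collect_le) auto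
  moreover have "z \<in> closure G" using z(1) assms(3) closure_mono by blast
  ultimately have "Inf (f ` closure G) = f z" by (intro cInf_eq_minimum) auto
  then show ?thesis using z unfolding is_min_def by auto
qed

theorem lemma9:
  fixes m n :: nat and Smin Smax \<alpha> :: real
    and R :: "(nat multiset \<times> nat multiset) set" and x :: "nat multiset" and C :: "nat set"
  assumes "m \<ge> 2" and "n \<ge> 1" and "Smin < Smax"
    and "x \<in> samples m n"
    and "0 \<le> \<alpha>" and "\<alpha> < 1"
    and "total_preorder_on_samples (samples m n) R"
    and "Fset m n (upset (samples m n) R x) \<alpha> \<noteq> {}"
    and "C \<subseteq> {..<m}"
    and "\<forall>G \<in> distrs m. \<forall>H \<in> distrs m.
           agree_cumulative C G H \<and> agree_pointwise C G H \<longrightarrow>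
           prob_samp m n G (upset (samples m n) R x) = prob_samp m n H (upset (samples m n) R x)"
  shows "is_min (mean Smin Smax m ` Fset_on m n (augment m C) (upset (samples m n) R x) \<alpha>)
                (Bstar Smin Smax m n \<alpha> R x)"
proof -
  define Om where "Om = upset (samples m n) R x"
  have fin: "finite C" using assms(9) finite_subset by blast
  have dominated: "\<exists>F'\<in>Gset_on m n (augment m C) Om \<alpha>. mean Smin Smax m F' \<le> mean Smin Smax m F"
    if F: "F \<in> Gset m n Om \<alpha>" for F
  proof -
    define F' where "F' = pushforward m (collapse C) F"
    have "F \<in> distrs m" using F by (simp add: Gset_def)
    have on: "F' \<in> distrs_on m (augment m C)"
      unfolding F'_def using assms(9) \<open>F \<in> distrs m\<close> by (rule collapse_in_distrs_on)
    then have "F' \<in> distrs m" by (simp add: distrs_on_def)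
    moreover have "agree_cumulative C F F'" "agree_pointwise C F F'"
      unfolding F'_def using assms(9)
      by (rule agree_cumulative_collapse, rule agree_pointwise_collapse)
    ultimately have "prob_samp m n F' Om = prob_samp m n F Om"
      using assms(10) \<open>F \<in> distrs m\<close> unfolding Om_def by metis
    then have "F' \<in> Gset_on m n (augment m C) Om \<alpha>"
      using F on \<open>F' \<in> distrs m\<close> by (simp add: Gset_on_def Gset_def)
    moreover have "mean Smin Smax m F' \<le> mean Smin Smax m F"
      unfolding F'_def using assms(1,3) \<open>F \<in> distrs m\<close> collapse_le[OF fin]
      by (intro mean_pushforward_le) auto
    ultimately show ?thesis by blast
  qed
  have "is_min (mean Smin Smax m ` closure (Gset_on m n (augment m C) Om \<alpha>))
               (Inf (mean Smin Smax m ` closure (Gset m n Om \<alpha>)))"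
  proof (rule is_min_closure_of_dominating_subset[OF compact_distrs])
    show "Gset m n Om \<alpha> \<subseteq> distrs m" by (auto simp: Gset_def)
    show "Gset_on m n (augment m C) Om \<alpha> \<subseteq> Gset m n Om \<alpha>" by (auto simp: Gset_on_def)
    show "Gset m n Om \<alpha> \<noteq> {}" using assms(8) by (simp add: Fset_def Om_def)
  qed (use continuous_mean dominated in auto)
  then show ?thesis by (simp add: Bstar_def Fset_def Fset_on_def Om_def)
qed

end
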